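(* Let $\varepsilon_0>0$, $\delta_1\in(0,1)$, and suppose $\mathcal{A}:\mathcal{D}\to\mathcal{S}$ is an $(\varepsilon_0,\delta_0)$-DP local randomizer with $$\delta_0\le \frac{(1-e^{-\varepsilon_0})\delta_1}{4e^{\varepsilon_0}\left(2+\frac{\ln(2/\delta_1)}{\ln(1/(1-e^{-5\varepsilon_0}))}\right)}.$$ Then there exists an $8\varepsilon_0$-DP local randomizer $\tilde{\mathcal{A}}:\mathcal{D}\to\mathcal{S}$ such that for every $d\in\mathcal{D}$, the total variation distance between the output distributions of $\mathcal{A}(d)$ and $\tilde{\mathcal{A}}(d)$ is at most $\delta_1$.
   Context: A randomized map $\mathcal{A}:\mathcal{D}\to\mathcal{S}$ is an $(\varepsilon_0,\delta_0)$-DP local randomizer if for all $d,d'\in\mathcal{D}$ and measurable $S\subseteq\mathcal{S}$, $\Pr[\mathcal{A}(d)\in S]\le e^{\varepsilon_0}\Pr[\mathcal{A}(d')\in S]+\delta_0$; it is $\varepsilon_0$-DP if this holds with $\delta_0=0$. *)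

theory Defs
  imports "HOL-Probability.Probability"
begin

text \<open>A randomized map from data domain D to output space (measurable space) \<Omega> is
modelled as a family of probability measures A d on \<Omega>, one for each d in D.\<close>

definition dp_local_randomizer ::
  "'a set \<Rightarrow> 'b measure \<Rightarrow> ('a \<Rightarrow> 'b measure) \<Rightarrow> real \<Rightarrow> real \<Rightarrow> bool" where
  "dp_local_randomizer D \<Omega> A \<epsilon> \<delta> \<longleftrightarrow>
     (\<forall>d\<in>D. prob_space (A d) \<and> sets (A d) = sets \<Omega>) \<and>
     (\<forall>d\<in>D. \<forall>d'\<in>D. \<forall>S\<in>sets \<Omega>.
        measure (A d) S \<le> exp \<epsilon> * measure (A d') S + \<delta>)"

abbreviation pure_dp_local_randomizer ::
  "'a set \<Rightarrow> 'b measure \<Rightarrow> ('a \<Rightarrow> 'b measure) \<Rightarrow> real \<Rightarrow> bool" where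
  "pure_dp_local_randomizer D \<Omega> A \<epsilon> \<equiv> dp_local_randomizer D \<Omega> A \<epsilon> 0"

definition tv_dist :: "'b measure \<Rightarrow> 'b measure \<Rightarrow> 'b measure \<Rightarrow> real" where
  "tv_dist \<Omega> P Q = (SUP S\<in>sets \<Omega>. \<bar>measure P S - measure Q S\<bar>)"

end

(*
  Fix a reference input d\<^sub>0 and clip the density of each A d with respect to A d\<^sub>0 into the
  band [exp (-\<epsilon>), exp \<epsilon>]. Because A d and A d\<^sub>0 are (\<epsilon>, \<delta>)-close in both directions,
  clipping changes the measure of every event by at most \<delta>; in particular the clipped measure
  has total mass within \<delta> of 1, and renormalising it costs at most another \<delta> in total variation.
  Two clipped measures have densities within a factor exp (2 \<epsilon>) of each other, and once
  \<delta> \<le> (1 - exp (-\<epsilon>)) / 2 their normalising constants are within a factor exp \<epsilon>; so the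
  renormalised randomizer is 3 \<epsilon>-DP, a fortiori 8 \<epsilon>-DP.
*)

theory Submission
  imports Defs
begin

lemma finite_measure_sup_measure':
  assumes "finite_measure A" "finite_measure B" "sets B = sets A"
  shows "finite_measure (sup_measure' A B)"
proof (rule finite_measureI)
  have "emeasure (sup_measure' A B) (space A) \<le> emeasure A (space A) + emeasure B (space A)"
    unfolding emeasure_sup_measure'[OF assms(3) sets.top]
  proof (rule SUP_least)
    fix Y assume "Y \<in> sets A"
    show "emeasure A (space A \<inter> Y) + emeasure B (space A \<inter> - Y) \<le> emeasure A (space A) + emeasure B (space A)"
      by (intro add_mono emeasure_mono) (auto simp: assms(3))
  qed
  also have "\<dots> < \<infinity>"
    using assms sets_eq_imp_space_eq[OF assms(3)]
    by (simp add: finite_measure.emeasure_finite less_top[symmetric])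
  finally show "emeasure (sup_measure' A B) (space (sup_measure' A B)) \<noteq> \<infinity>"
    using assms(3) by simp
qed

lemma absolutely_continuous_sup_measure':
  assumes "sets B = sets A"
  shows "absolutely_continuous (sup_measure' A B) A" "absolutely_continuous (sup_measure' A B) B"
proof -
  have "N \<in> null_sets A \<and> N \<in> null_sets B" if "N \<in> null_sets (sup_measure' A B)" for N
  proof -
    have N: "N \<in> sets A" "emeasure (sup_measure' A B) N = 0"
      using that assms by (simp_all add: null_sets_def)
    have "emeasure A N = 0" "emeasure B N = 0"
      using le_emeasure_sup_measure'1[OF assms N(1)] le_emeasure_sup_measure'2[OF assms N(1)] N(2)
      by simp_all
    then show ?thesis
      using N(1) assms by (simp add: null_sets_def)
  qed
  then show "absolutely_continuous (sup_measure' A B) A" "absolutely_continuous (sup_measure' A B) B"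
    unfolding absolutely_continuous_def by blast+
qed

lemma emeasure_density_mono:
  assumes [measurable]: "f \<in> borel_measurable M" "g \<in> borel_measurable M" "S \<in> sets M"
    and "\<And>x. x \<in> S \<Longrightarrow> f x \<le> g x"
  shows "emeasure (density M f) S \<le> emeasure (density M g) S"
  using assms(4) by (auto simp: emeasure_density intro!: nn_integral_mono split: split_indicator)

lemma emeasure_density_cmult:
  assumes [measurable]: "g \<in> borel_measurable M" "S \<in> sets M"
  shows "emeasure (density M (\<lambda>x. c * g x)) S = c * emeasure (density M g) S"
  by (simp add: emeasure_density nn_integral_cmult mult.assoc)

lemma emeasure_le_plus_by_split:
  assumes "sets N = sets M" "S \<in> sets M" "T \<in> sets M"
    and "emeasure M (S \<inter> T) \<le> emeasure N (S \<inter> T) + \<delta>"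
    and "emeasure M (S - T) \<le> emeasure N (S - T)"
  shows "emeasure M S \<le> emeasure N S + \<delta>"
proof -
  have split: "emeasure K S = emeasure K (S \<inter> T) + emeasure K (S - T)" if "sets K = sets M" for K
    using plus_emeasure[of "S \<inter> T" K "S - T"] that assms(2,3) by (simp add: Int_Diff_Un Int_Diff_disjoint)
  have "emeasure M S \<le> emeasure N (S \<inter> T) + \<delta> + emeasure N (S - T)"
    unfolding split[OF refl] using assms(4,5) by (rule add_mono)
  also have "\<dots> = emeasure N S + \<delta>"
    using split[OF assms(1)] by (simp add: ac_simps)
  finally show ?thesis .
qed

definition clip_density :: "ennreal \<Rightarrow> ennreal \<Rightarrow> ('a \<Rightarrow> ennreal) \<Rightarrow> ('a \<Rightarrow> ennreal) \<Rightarrow> 'a \<Rightarrow> ennreal"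
  where "clip_density a b g f x = max (a * g x) (min (f x) (b * g x))"

lemma clip_density_measurable [measurable]:
  assumes [measurable]: "f \<in> borel_measurable M" "g \<in> borel_measurable M"
  shows "clip_density a b g f \<in> borel_measurable M"
  unfolding clip_density_def by measurable

context
  fixes \<mu> :: "'a measure" and f g :: "'a \<Rightarrow> ennreal" and a b \<delta> :: ennreal
  assumes f [measurable]: "f \<in> borel_measurable \<mu>" and g [measurable]: "g \<in> borel_measurable \<mu>"
    and a_le_b: "a \<le> b"
begin

lemma emeasure_clip_density_ge:
  "S \<in> sets \<mu> \<Longrightarrow> a * emeasure (density \<mu> g) S \<le> emeasure (density \<mu> (clip_density a b g f)) S"
  by (auto simp: emeasure_density_cmult[symmetric] clip_density_def intro!: emeasure_density_mono)

lemma emeasure_clip_density_le: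
  "S \<in> sets \<mu> \<Longrightarrow> emeasure (density \<mu> (clip_density a b g f)) S \<le> b * emeasure (density \<mu> g) S"
  using mult_right_mono[OF a_le_b]
  by (auto simp: emeasure_density_cmult[symmetric] clip_density_def intro!: emeasure_density_mono)

(* Split S at the set where f leaves the band on the relevant side: there the clipped density
   is the band edge, so the hypothesis applies; elsewhere the comparison is pointwise. *)
lemma emeasure_le_clip_density_plus:
  assumes "\<forall>T\<in>sets \<mu>. emeasure (density \<mu> f) T \<le> b * emeasure (density \<mu> g) T + \<delta>"
    and S: "S \<in> sets \<mu>"
  shows "emeasure (density \<mu> f) S \<le> emeasure (density \<mu> (clip_density a b g f)) S + \<delta>"
proof (rule emeasure_le_plus_by_split)
  let ?T = "{x \<in> space \<mu>. b * g x < f x}"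
  show T: "?T \<in> sets (density \<mu> f)" by measurable
  have "emeasure (density \<mu> f) (S \<inter> ?T) \<le> emeasure (density \<mu> (\<lambda>x. b * g x)) (S \<inter> ?T) + \<delta>"
    using assms T by (simp add: emeasure_density_cmult)
  also have "\<dots> \<le> emeasure (density \<mu> (clip_density a b g f)) (S \<inter> ?T) + \<delta>"
    using T S by (intro add_right_mono emeasure_density_mono) (auto simp: clip_density_def)
  finally show "emeasure (density \<mu> f) (S \<inter> ?T) \<le> \<dots>" .
  show "emeasure (density \<mu> f) (S - ?T) \<le> emeasure (density \<mu> (clip_density a b g f)) (S - ?T)"
    using T S sets.sets_into_space[OF S]
    by (intro emeasure_density_mono) (auto simp: clip_density_def not_less)
qed (use S in auto)

lemma emeasure_clip_density_le_plus:
  assumes "\<forall>T\<in>sets \<mu>. a * emeasure (density \<mu> g) T \<le> emeasure (density \<mu> f) T + \<delta>"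
    and S: "S \<in> sets \<mu>"
  shows "emeasure (density \<mu> (clip_density a b g f)) S \<le> emeasure (density \<mu> f) S + \<delta>"
proof (rule emeasure_le_plus_by_split)
  let ?T = "{x \<in> space \<mu>. f x < a * g x}"
  show T: "?T \<in> sets (density \<mu> (clip_density a b g f))" by measurable
  have "emeasure (density \<mu> (clip_density a b g f)) (S \<inter> ?T) \<le> emeasure (density \<mu> (\<lambda>x. a * g x)) (S \<inter> ?T)"
    using T S by (intro emeasure_density_mono) (auto simp: clip_density_def min_le_iff_disj)
  also have "\<dots> \<le> emeasure (density \<mu> f) (S \<inter> ?T) + \<delta>"
    using assms T by (simp add: emeasure_density_cmult)
  finally show "emeasure (density \<mu> (clip_density a b g f)) (S \<inter> ?T) \<le> \<dots>" .
  show "emeasure (density \<mu> (clip_density a b g f)) (S - ?T) \<le> emeasure (density \<mu> f) (S - ?T)"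
    using T S sets.sets_into_space[OF S]
    by (intro emeasure_density_mono) (auto simp: clip_density_def not_less)
qed (use S in auto)

end

lemma exp_minus_mult_le_plus:
  fixes \<epsilon> \<delta> x y :: real
  assumes "y \<le> exp \<epsilon> * x + \<delta>" "0 \<le> \<epsilon>" "0 \<le> \<delta>"
  shows "exp (- \<epsilon>) * y \<le> x + \<delta>"
proof -
  have "exp (- \<epsilon>) * y \<le> exp (- \<epsilon>) * (exp \<epsilon> * x + \<delta>)"
    using assms(1) by simp
  also have "\<dots> = x + exp (- \<epsilon>) * \<delta>"
    by (simp add: distrib_left mult.assoc[symmetric] exp_add[symmetric])
  also have "\<dots> \<le> x + \<delta>"
    using assms(2,3) by (simp add: mult_left_le_one_le)
  finally show ?thesis .
qed

(* Densities are taken with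
   respect to sup_measure' P Q because P need not be absolutely continuous with respect to Q. *)
definition clipped_measure :: "real \<Rightarrow> 'a measure \<Rightarrow> 'a measure \<Rightarrow> 'a measure" where
  "clipped_measure \<epsilon> P Q =
     density (sup_measure' P Q)
       (clip_density (ennreal (exp (- \<epsilon>))) (ennreal (exp \<epsilon>))
         (RN_deriv (sup_measure' P Q) Q) (RN_deriv (sup_measure' P Q) P))"

lemma sets_clipped_measure [simp]: "sets Q = sets P \<Longrightarrow> sets (clipped_measure \<epsilon> P Q) = sets P"
  by (simp add: clipped_measure_def)

context
  fixes P Q :: "'a measure" and \<epsilon> :: real
  assumes P: "finite_measure P" and Q: "finite_measure Q" and sets_Q: "sets Q = sets P"
    and \<epsilon>: "0 \<le> \<epsilon>"
begin

private abbreviation "\<mu> \<equiv> sup_measure' P Q"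

private lemma density_RN_deriv_sup_measure':
  "density \<mu> (RN_deriv \<mu> P) = P" "density \<mu> (RN_deriv \<mu> Q) = Q"
proof -
  interpret finite_measure \<mu>
    using finite_measure_sup_measure'[OF P Q sets_Q] .
  show "density \<mu> (RN_deriv \<mu> P) = P" "density \<mu> (RN_deriv \<mu> Q) = Q"
    using absolutely_continuous_sup_measure'[OF sets_Q] sets_Q by (simp_all add: density_RN_deriv)
qed

private lemma ennreal_exp_minus_le: "ennreal (exp (- \<epsilon>)) \<le> ennreal (exp \<epsilon>)"
  using \<epsilon> by (simp add: ennreal_leI)

private lemmas clip_bounds =
  emeasure_clip_density_ge emeasure_clip_density_le
  emeasure_le_clip_density_plus emeasure_clip_density_le_plus
private lemmas clip = clip_bounds[where \<mu>=\<mu> and f="RN_deriv \<mu> P" and g="RN_deriv \<mu> Q"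
    and a="ennreal (exp (- \<epsilon>))" and b="ennreal (exp \<epsilon>)", OF borel_measurable_RN_deriv borel_measurable_RN_deriv,
    OF ennreal_exp_minus_le, unfolded density_RN_deriv_sup_measure' sets_sup_measure'[OF sets_Q],
    folded clipped_measure_def]

lemma finite_measure_clipped_measure: "finite_measure (clipped_measure \<epsilon> P Q)"
proof (rule finite_measureI)
  have "emeasure (clipped_measure \<epsilon> P Q) (space P) \<le> ennreal (exp \<epsilon>) * emeasure Q (space P)"
    by (rule clip(2)) simp
  also have "\<dots> < \<infinity>"
    using finite_measure.emeasure_finite[OF Q] by (simp add: ennreal_mult_eq_top_iff less_top[symmetric])
  finally show "emeasure (clipped_measure \<epsilon> P Q) (space (clipped_measure \<epsilon> P Q)) \<noteq> \<infinity>"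
    using sets_eq_imp_space_eq[OF sets_clipped_measure[OF sets_Q]] by simp
qed

private lemmas emeasure_eq_measure = finite_measure.emeasure_eq_measure[OF P]
  finite_measure.emeasure_eq_measure[OF Q]
  finite_measure.emeasure_eq_measure[OF finite_measure_clipped_measure]

lemma clipped_measure_ge:
  "S \<in> sets P \<Longrightarrow> exp (- \<epsilon>) * measure Q S \<le> measure (clipped_measure \<epsilon> P Q) S"
  using clip(1)[of S] by (simp add: emeasure_eq_measure ennreal_mult[symmetric])

lemma clipped_measure_le:
  "S \<in> sets P \<Longrightarrow> measure (clipped_measure \<epsilon> P Q) S \<le> exp \<epsilon> * measure Q S"
  using clip(2)[of S] by (simp add: emeasure_eq_measure ennreal_mult[symmetric])

context
  fixes \<delta> :: real
  assumes \<delta>: "0 \<le> \<delta>"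
    and P_le: "\<And>S. S \<in> sets P \<Longrightarrow> measure P S \<le> exp \<epsilon> * measure Q S + \<delta>"
    and Q_le: "\<And>S. S \<in> sets P \<Longrightarrow> measure Q S \<le> exp \<epsilon> * measure P S + \<delta>"
begin

private lemmas ennreal_affine =
  ennreal_mult[OF exp_ge_zero measure_nonneg, symmetric]
  ennreal_plus[OF mult_nonneg_nonneg[OF exp_ge_zero measure_nonneg] \<delta>, symmetric]
  ennreal_plus[OF measure_nonneg \<delta>, symmetric]

lemma measure_le_clipped_measure_plus:
  assumes "S \<in> sets P"
  shows "measure P S \<le> measure (clipped_measure \<epsilon> P Q) S + \<delta>"
proof -
  have "\<forall>S\<in>sets P. emeasure P S \<le> ennreal (exp \<epsilon>) * emeasure Q S + ennreal \<delta>"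
    unfolding emeasure_eq_measure ennreal_affine by (intro ballI ennreal_leI P_le)
  from clip(3)[OF this assms] show ?thesis
    unfolding emeasure_eq_measure ennreal_affine by (subst (asm) ennreal_le_iff) (auto simp: \<delta>)
qed

lemma clipped_measure_le_measure_plus:
  assumes "S \<in> sets P"
  shows "measure (clipped_measure \<epsilon> P Q) S \<le> measure P S + \<delta>"
proof -
  have "\<forall>S\<in>sets P. ennreal (exp (- \<epsilon>)) * emeasure Q S \<le> emeasure P S + ennreal \<delta>"
    unfolding emeasure_eq_measure ennreal_affine
    by (intro ballI ennreal_leI exp_minus_mult_le_plus[OF Q_le \<epsilon> \<delta>])
  from clip(4)[OF this assms] show ?thesis
    unfolding emeasure_eq_measure ennreal_affine by (subst (asm) ennreal_le_iff) (auto simp: \<delta>)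
qed

end

end

definition normalize_measure :: "'a measure \<Rightarrow> 'a measure" where
  "normalize_measure M = density M (\<lambda>_. ennreal (1 / measure M (space M)))"

lemma sets_normalize_measure [simp]: "sets (normalize_measure M) = sets M"
  by (simp add: normalize_measure_def)

lemma measure_normalize_measure:
  "S \<in> sets M \<Longrightarrow> measure (normalize_measure M) S = measure M S / measure M (space M)"
  by (simp add: normalize_measure_def measure_density_const)

lemma prob_space_normalize_measure:
  assumes "finite_measure M" "0 < measure M (space M)"
  shows "prob_space (normalize_measure M)"
proof (rule prob_spaceI)
  show "emeasure (normalize_measure M) (space (normalize_measure M)) = 1"
    using assms by (simp add: normalize_measure_def emeasure_density_const
        finite_measure.emeasure_eq_measure ennreal_mult[symmetric])
qed

lemma tv_dist_le:
  assumes "\<And>S. S \<in> sets \<Omega> \<Longrightarrow> \<bar>measure P S - measure Q S\<bar> \<le> t"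
  shows "tv_dist \<Omega> P Q \<le> t"
  unfolding tv_dist_def using assms by (intro cSUP_least) auto

lemma dp_local_randomizer_mono:
  assumes "dp_local_randomizer D \<Omega> A \<epsilon> \<delta>" "\<epsilon> \<le> \<epsilon>'"
  shows "dp_local_randomizer D \<Omega> A \<epsilon>' \<delta>"
  using assms unfolding dp_local_randomizer_def
  by (meson add_right_mono exp_le_cancel_iff measure_nonneg mult_right_mono order_trans)

lemma le_exp_mult_if_near_one:
  fixes \<epsilon> \<delta> Z Z' :: real
  assumes "0 \<le> \<epsilon>" "\<delta> \<le> (1 - exp (- \<epsilon>)) / 2" "\<bar>Z - 1\<bar> \<le> \<delta>" "\<bar>Z' - 1\<bar> \<le> \<delta>"
  shows "Z' \<le> exp \<epsilon> * Z"
proof -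
  have "2 * exp \<epsilon> * \<delta> \<le> exp \<epsilon> * (1 - exp (- \<epsilon>))"
    using assms(2) by simp
  also have "\<dots> = exp \<epsilon> - 1"
    by (simp add: algebra_simps exp_minus_inverse)
  finally have "2 * exp \<epsilon> * \<delta> \<le> exp \<epsilon> - 1" .
  moreover have "(1 + exp \<epsilon>) * \<delta> \<le> 2 * exp \<epsilon> * \<delta>"
    using assms(1,3) by (intro mult_right_mono) auto
  moreover have "exp \<epsilon> * (1 - \<delta>) \<le> exp \<epsilon> * Z"
    using assms(3) by simp
  ultimately show ?thesis
    using assms(4) by (simp add: algebra_simps)
qed

lemma divide_le_exp_mult_divide:
  fixes \<epsilon> a b q Z Z' :: real
  assumes "a \<le> exp \<epsilon> * q" "exp (- \<epsilon>) * q \<le> b" "0 \<le> q"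
    and "Z' \<le> exp \<epsilon> * Z" "0 < Z" "0 < Z'"
  shows "a / Z \<le> exp (3 * \<epsilon>) * (b / Z')"
proof -
  have "q \<le> exp \<epsilon> * b"
    using mult_left_mono[OF assms(2), of "exp \<epsilon>"] by (simp add: mult.assoc[symmetric] exp_add[symmetric])
  then have "a \<le> exp (2 * \<epsilon>) * b"
    using assms(1) mult_left_mono[of q "exp \<epsilon> * b" "exp \<epsilon>"]
    by (simp add: mult.assoc[symmetric] exp_add[symmetric])
  moreover have "0 \<le> b"
    using assms(2,3) by (smt (verit) exp_gt_zero mult_nonneg_nonneg)
  moreover have "1 / Z \<le> exp \<epsilon> / Z'"
    using assms(4-6) by (simp add: field_simps)
  ultimately have "a * (1 / Z) \<le> exp (2 * \<epsilon>) * b * (exp \<epsilon> / Z')"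
    using assms(5) by (intro mult_mono) auto
  also have "\<dots> = exp (3 * \<epsilon>) * (b / Z')"
    by (simp add: exp_add[symmetric])
  finally show ?thesis
    by simp
qed

lemma abs_diff_divide_le:
  fixes p a Z \<delta> :: real
  assumes "\<bar>p - a\<bar> \<le> \<delta>" "\<bar>Z - 1\<bar> \<le> \<delta>" "0 \<le> a" "a \<le> Z" "0 < Z"
  shows "\<bar>p - a / Z\<bar> \<le> 2 * \<delta>"
proof -
  have "a / Z - a = a / Z * (1 - Z)"
    using assms(5) by (simp add: field_simps)
  then have "\<bar>a / Z - a\<bar> = a / Z * \<bar>1 - Z\<bar>"
    using assms(3,5) by (simp add: abs_mult)
  also have "\<dots> \<le> \<bar>1 - Z\<bar>"
    using assms(3-5) by (intro mult_left_le_one_le) auto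
  finally show ?thesis
    using assms(1,2) by linarith
qed

lemma abs_total_mass_minus_one_le:
  assumes "prob_space P" "sets C = sets P"
    and "\<And>S. S \<in> sets P \<Longrightarrow> \<bar>measure P S - measure C S\<bar> \<le> \<delta>"
  shows "\<bar>measure C (space C) - 1\<bar> \<le> \<delta>"
  using assms(3)[OF sets.top] prob_space.prob_space[OF assms(1)] sets_eq_imp_space_eq[OF assms(2)]
  by simp

lemma tv_dist_normalize_measure_le:
  assumes P: "prob_space P" and C: "finite_measure C" and sets_C: "sets C = sets P"
    and sets_\<Omega>: "sets \<Omega> = sets P"
    and close: "\<And>S. S \<in> sets P \<Longrightarrow> \<bar>measure P S - measure C S\<bar> \<le> \<delta>" and "\<delta> < 1"
  shows "tv_dist \<Omega> P (normalize_measure C) \<le> 2 * \<delta>"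
proof (rule tv_dist_le)
  fix S assume "S \<in> sets \<Omega>"
  then have S: "S \<in> sets C"
    using sets_C sets_\<Omega> by simp
  have Z: "\<bar>measure C (space C) - 1\<bar> \<le> \<delta>"
    using abs_total_mass_minus_one_le[OF P sets_C close] .
  show "\<bar>measure P S - measure (normalize_measure C) S\<bar> \<le> 2 * \<delta>"
    unfolding measure_normalize_measure[OF S]
  proof (rule abs_diff_divide_le[OF _ Z])
    show "\<bar>measure P S - measure C S\<bar> \<le> \<delta>"
      using close S sets_C by simp
    show "measure C S \<le> measure C (space C)"
      using finite_measure.bounded_measure[OF C] .
    show "0 < measure C (space C)"
      using Z \<open>\<delta> < 1\<close> by linarith
  qed simp
qed

lemma pure_dp_normalize_measure:
  fixes Q :: "'b measure" and C :: "'a \<Rightarrow> 'b measure"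
  assumes C: "\<And>d. d \<in> D \<Longrightarrow> finite_measure (C d)" and sets_C: "\<And>d. d \<in> D \<Longrightarrow> sets (C d) = sets \<Omega>"
    and C_ge: "\<And>d S. d \<in> D \<Longrightarrow> S \<in> sets \<Omega> \<Longrightarrow> exp (- \<epsilon>) * measure Q S \<le> measure (C d) S"
    and C_le: "\<And>d S. d \<in> D \<Longrightarrow> S \<in> sets \<Omega> \<Longrightarrow> measure (C d) S \<le> exp \<epsilon> * measure Q S"
    and mass: "\<And>d. d \<in> D \<Longrightarrow> \<bar>measure (C d) (space \<Omega>) - 1\<bar> \<le> \<delta>"
    and \<epsilon>: "0 \<le> \<epsilon>" and \<delta>: "\<delta> \<le> (1 - exp (- \<epsilon>)) / 2"
  shows "pure_dp_local_randomizer D \<Omega> (\<lambda>d. normalize_measure (C d)) (3 * \<epsilon>)"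
  unfolding dp_local_randomizer_def
proof (intro conjI ballI)
  define Z where "Z d = measure (C d) (space \<Omega>)" for d
  have space_C: "space (C d) = space \<Omega>" if "d \<in> D" for d
    using sets_C[OF that] by (rule sets_eq_imp_space_eq)
  have Z_pos: "0 < Z d" if "d \<in> D" for d
  proof -
    have "(1 - exp (- \<epsilon>)) / 2 < 1 / 2"
      by simp
    then show ?thesis
      using mass[OF that] \<delta> unfolding Z_def by linarith
  qed
  fix d assume d: "d \<in> D"
  show "prob_space (normalize_measure (C d))"
    using prob_space_normalize_measure[OF C[OF d]] Z_pos[OF d] space_C[OF d] unfolding Z_def by simp
  show "sets (normalize_measure (C d)) = sets \<Omega>"
    using sets_C[OF d] by simp
  fix d' S assume d': "d' \<in> D" and S: "S \<in> sets \<Omega>"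
  have "measure (C d) S / Z d \<le> exp (3 * \<epsilon>) * (measure (C d') S / Z d')"
    using C_le[OF d S] C_ge[OF d' S] le_exp_mult_if_near_one[OF \<epsilon> \<delta> mass[OF d] mass[OF d']]
      Z_pos[OF d] Z_pos[OF d']
    unfolding Z_def by (intro divide_le_exp_mult_divide) auto
  moreover have "S \<in> sets (C d)" "S \<in> sets (C d')"
    using sets_C[OF d] sets_C[OF d'] S by simp_all
  ultimately show "measure (normalize_measure (C d)) S \<le> exp (3 * \<epsilon>) * measure (normalize_measure (C d')) S + 0"
    using space_C[OF d] space_C[OF d'] unfolding Z_def by (simp add: measure_normalize_measure)
qed

theorem dp_local_randomizer_purification:
  assumes A: "dp_local_randomizer D \<Omega> A \<epsilon> \<delta>" and \<epsilon>: "0 \<le> \<epsilon>"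
    and \<delta>: "\<delta> \<le> (1 - exp (- \<epsilon>)) / 2"
  shows "\<exists>A'. pure_dp_local_randomizer D \<Omega> A' (3 * \<epsilon>) \<and> (\<forall>d\<in>D. tv_dist \<Omega> (A d) (A' d) \<le> 2 * \<delta>)"
proof (cases "D = {}")
  case True
  then show ?thesis
    by (auto simp: dp_local_randomizer_def)
next
  case False
  then obtain d\<^sub>0 where d\<^sub>0: "d\<^sub>0 \<in> D"
    by blast
  have prob: "prob_space (A d)" and sets_A: "sets (A d) = sets \<Omega>" if "d \<in> D" for d
    using A that unfolding dp_local_randomizer_def by auto
  have DP: "measure (A d) S \<le> exp \<epsilon> * measure (A d') S + \<delta>" if "d \<in> D" "d' \<in> D" "S \<in> sets \<Omega>" for d d' S
    using A that unfolding dp_local_randomizer_def by auto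
  have "0 \<le> \<delta>"
    using DP[OF d\<^sub>0 d\<^sub>0 sets.empty_sets] by simp
  define C where "C d = clipped_measure \<epsilon> (A d) (A d\<^sub>0)" for d
  have C: "finite_measure (C d)" "sets (C d) = sets \<Omega>"
    and C_ge: "\<And>S. S \<in> sets \<Omega> \<Longrightarrow> exp (- \<epsilon>) * measure (A d\<^sub>0) S \<le> measure (C d) S"
    and C_le: "\<And>S. S \<in> sets \<Omega> \<Longrightarrow> measure (C d) S \<le> exp \<epsilon> * measure (A d\<^sub>0) S"
    and close: "\<And>S. S \<in> sets \<Omega> \<Longrightarrow> \<bar>measure (A d) S - measure (C d) S\<bar> \<le> \<delta>"
    if d: "d \<in> D" for d
  proof -
    have sets_eq: "sets (A d\<^sub>0) = sets (A d)"
      using sets_A d\<^sub>0 d by simp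
    note clipped = finite_measure_clipped_measure clipped_measure_ge clipped_measure_le
      measure_le_clipped_measure_plus clipped_measure_le_measure_plus
    note clipped = clipped[OF prob_space.finite_measure[OF prob[OF d]] prob_space.finite_measure[OF prob[OF d\<^sub>0]]
        sets_eq \<epsilon>, folded C_def, unfolded sets_A[OF d]]
    show "finite_measure (C d)" "sets (C d) = sets \<Omega>"
      using clipped(1) sets_eq sets_A[OF d] by (simp_all add: C_def)
    show "exp (- \<epsilon>) * measure (A d\<^sub>0) S \<le> measure (C d) S" "measure (C d) S \<le> exp \<epsilon> * measure (A d\<^sub>0) S"
      if "S \<in> sets \<Omega>" for S
      using clipped(2,3) that by auto
    show "\<bar>measure (A d) S - measure (C d) S\<bar> \<le> \<delta>" if "S \<in> sets \<Omega>" for S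
      using clipped(4,5)[OF \<open>0 \<le> \<delta>\<close> DP[OF d d\<^sub>0] DP[OF d\<^sub>0 d] that] by linarith
  qed
  have mass: "\<bar>measure (C d) (space \<Omega>) - 1\<bar> \<le> \<delta>" if "d \<in> D" for d
    using abs_total_mass_minus_one_le[OF prob[OF that], of "C d"] C[OF that] close[OF that] sets_A[OF that]
      sets_eq_imp_space_eq[OF C(2)[OF that]] by simp
  have "(1 - exp (- \<epsilon>)) / 2 < 1 / 2"
    by simp
  with \<delta> have "\<delta> < 1"
    by linarith
  have "pure_dp_local_randomizer D \<Omega> (\<lambda>d. normalize_measure (C d)) (3 * \<epsilon>)"
    using C C_ge C_le mass \<epsilon> \<delta> by (rule pure_dp_normalize_measure)
  moreover have "tv_dist \<Omega> (A d) (normalize_measure (C d)) \<le> 2 * \<delta>" if "d \<in> D" for d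
    using tv_dist_normalize_measure_le[OF prob[OF that] C(1)[OF that]] C(2)[OF that] close[OF that]
      sets_A[OF that] \<open>\<delta> < 1\<close> by simp
  ultimately show ?thesis
    by blast
qed

lemma delta_bound_consequences:
  fixes \<epsilon>\<^sub>0 \<delta>\<^sub>0 \<delta>\<^sub>1 :: real
  assumes "\<epsilon>\<^sub>0 > 0" and "0 < \<delta>\<^sub>1" and "\<delta>\<^sub>1 < 1"
    and "\<delta>\<^sub>0 \<le> (1 - exp (- \<epsilon>\<^sub>0)) * \<delta>\<^sub>1 /
           (4 * exp \<epsilon>\<^sub>0 * (2 + ln (2 / \<delta>\<^sub>1) / ln (1 / (1 - exp (- 5 * \<epsilon>\<^sub>0)))))"
  shows "\<delta>\<^sub>0 \<le> (1 - exp (- \<epsilon>\<^sub>0)) / 2" "2 * \<delta>\<^sub>0 \<le> \<delta>\<^sub>1"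
proof -
  define x where "x = 1 - exp (- \<epsilon>\<^sub>0)"
  define L where "L = ln (2 / \<delta>\<^sub>1) / ln (1 / (1 - exp (- 5 * \<epsilon>\<^sub>0)))"
  have x: "0 < x" "x < 1"
    unfolding x_def using assms(1) by auto
  have "0 < ln (2 / \<delta>\<^sub>1)"
    using assms(2,3) by simp
  moreover have "0 < ln (1 / (1 - exp (- 5 * \<epsilon>\<^sub>0)))"
    using assms(1) by (simp add: ln_div)
  ultimately have "0 \<le> L"
    unfolding L_def by simp
  have "\<delta>\<^sub>0 \<le> x * \<delta>\<^sub>1 / (4 * exp \<epsilon>\<^sub>0 * (2 + L))"
    using assms(4) unfolding x_def L_def .
  also have "\<dots> \<le> x * \<delta>\<^sub>1 / 8"
  proof (rule divide_left_mono)
    have "1 * 2 \<le> exp \<epsilon>\<^sub>0 * (2 + L)"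
      using assms(1) \<open>0 \<le> L\<close> by (intro mult_mono) auto
    then show "8 \<le> 4 * exp \<epsilon>\<^sub>0 * (2 + L)"
      by simp
  qed (use x assms(2) \<open>0 \<le> L\<close> in auto)
  finally have \<delta>\<^sub>0: "\<delta>\<^sub>0 \<le> x * \<delta>\<^sub>1 / 8" .
  have "x * \<delta>\<^sub>1 \<le> x"
    using x assms(3) by (simp add: mult_left_le)
  with \<delta>\<^sub>0 x show "\<delta>\<^sub>0 \<le> (1 - exp (- \<epsilon>\<^sub>0)) / 2"
    unfolding x_def[symmetric] by linarith
  have "x * \<delta>\<^sub>1 \<le> \<delta>\<^sub>1"
    using x assms(2) by (simp add: mult_left_le_one_le)
  with \<delta>\<^sub>0 assms(2) show "2 * \<delta>\<^sub>0 \<le> \<delta>\<^sub>1"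
    by linarith
qed

theorem mainTheorem9:
  fixes D :: "'a set" and \<Omega> :: "'b measure" and A :: "'a \<Rightarrow> 'b measure"
    and \<epsilon>\<^sub>0 \<delta>\<^sub>0 \<delta>\<^sub>1 :: real
  assumes "\<epsilon>\<^sub>0 > 0" and "0 < \<delta>\<^sub>1" and "\<delta>\<^sub>1 < 1"
    and "dp_local_randomizer D \<Omega> A \<epsilon>\<^sub>0 \<delta>\<^sub>0"
    and "\<delta>\<^sub>0 \<le> (1 - exp (- \<epsilon>\<^sub>0)) * \<delta>\<^sub>1 /
           (4 * exp \<epsilon>\<^sub>0 * (2 + ln (2 / \<delta>\<^sub>1) / ln (1 / (1 - exp (- 5 * \<epsilon>\<^sub>0)))))"
  shows "\<exists>A'. pure_dp_local_randomizer D \<Omega> A' (8 * \<epsilon>\<^sub>0) \<and>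
              (\<forall>d\<in>D. tv_dist \<Omega> (A d) (A' d) \<le> \<delta>\<^sub>1)"
proof -
  note \<delta>\<^sub>0 = delta_bound_consequences[OF assms(1-3,5)]
  obtain A' where pure: "pure_dp_local_randomizer D \<Omega> A' (3 * \<epsilon>\<^sub>0)"
    and tv: "\<forall>d\<in>D. tv_dist \<Omega> (A d) (A' d) \<le> 2 * \<delta>\<^sub>0"
    using dp_local_randomizer_purification[OF assms(4) _ \<delta>\<^sub>0(1)] assms(1) by auto
  have "pure_dp_local_randomizer D \<Omega> A' (8 * \<epsilon>\<^sub>0)"
    using dp_local_randomizer_mono[OF pure] assms(1) by simp
  with tv \<delta>\<^sub>0(2) show ?thesis
    by force
qed

end
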